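(* Let $n\ge 3$, let $w$ be the solution of \[ w''+\frac{n-1}{t}w'+e^{w}=0,\qquad w(0)=0,\quad w'(0)=0 \qquad (t>0), \] and let $w_0(t)=\ln(2n-4)-2\ln t$. Set $\lambda(t)=t^2e^{w(t)}$. (i) If $w$ and $w_0$ intersect infinitely many times on $(0,\infty)$, then the solution curve of the Gelfand problem makes infinitely many turns, i.e. $\lambda'(t)$ changes sign infinitely many times on $(0,\infty)$. (ii) Suppose $w$ and $w_0$ intersect only finitely many times, and $T$ is a point after the last intersection such that $(w-w_0)'(t)$ is of one sign for $t>T$. Then $\lambda(t)$ is monotone for $t>T$.
   Context: The Gelfand problem is $u''+\frac{n-1}{r}u'+\lambda e^u=0$ for $0<r<1$, $u'(0)=u(1)=0$. The solution $w$ is defined for all $t>0$. The function $w_0$ also solves the differential equation satisfied by $w$. The solution curve of the Gelfand problem is $t\mapsto(\lambda,u(0))=(t^2e^{w(t)},-w(t))$, $t\in(0,\infty)$; for each $t$, $u(r)=w(tr)-w(t)$ is the solution at $\lambda=\lambda(t)$. A turn is a change of sign of $\lambda'(t)$. *)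

theory Defs
  imports "HOL-Analysis.Analysis"
begin

definition w0 :: "nat \<Rightarrow> real \<Rightarrow> real" where
  "w0 n t = ln (2 * real n - 4) - 2 * ln t"

definition gelfand_lambda :: "(real \<Rightarrow> real) \<Rightarrow> real \<Rightarrow> real" where
  "gelfand_lambda w t = t^2 * exp (w t)"

definition changes_sign_infinitely_often :: "(real \<Rightarrow> real) \<Rightarrow> bool" where
  "changes_sign_infinitely_often f \<longleftrightarrow>
     (\<exists>s :: nat \<Rightarrow> real. strict_mono s \<and> (\<forall>k. 0 < s k \<and> f (s k) * f (s (Suc k)) < 0))"

end

theory Submission
  imports Defs
begin

text \<open>
  Put \<open>v = w - w0 n\<close>. Since \<open>\<lambda>(t) = t\<^sup>2 e\<^bsup>w(t)\<^esup>\<close>, we have \<open>\<lambda>' = \<lambda> v'\<close>, so the turns of the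
  solution curve are the sign changes of \<open>v'\<close>. The function \<open>v\<close> solves
  \<open>t\<^sup>2 v'' + (n - 1) t v' + (2n - 4)(e\<^sup>v - 1) = 0\<close>, whose energy
  \<open>E = (t v')\<^sup>2/2 + (2n - 4)(e\<^sup>v - 1 - v)\<close> satisfies \<open>E' = -(n - 2) t v'\<^sup>2\<close>, hence
  \<open>(t\<^bsup>2(n-2)\<^esup> E)' = 2(n - 2)(2n - 4) t\<^bsup>2n-5\<^esup> (e\<^sup>v - 1 - v) \<ge> 0\<close>. As \<open>v \<rightarrow> -\<infinity>\<close> for \<open>t \<rightarrow> 0\<close>,
  \<open>E > 0\<close> near 0 and therefore everywhere, so every zero of \<open>v\<close> is simple. Simple zeros do not
  accumulate in \<open>(0, \<infinity>)\<close> and are crossed transversally, so between two of them \<open>v'\<close> takes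
  both signs; this gives (i). Part (ii) is immediate from \<open>\<lambda>' = \<lambda> v'\<close>.
\<close>

lemma changes_sign_infinitely_oftenI:
  fixes f :: "real \<Rightarrow> real"
  assumes pos: "\<And>M. \<exists>t>M. f t > 0" and neg: "\<And>M. \<exists>t>M. f t < 0"
  shows "changes_sign_infinitely_often f"
proof -
  have "\<forall>M. \<exists>t. M < t \<and> f t > 0" "\<forall>M. \<exists>t. M < t \<and> f t < 0"
    using pos neg by blast+
  then obtain p q where p: "\<And>M. M < p M \<and> f (p M) > 0" and q: "\<And>M. M < q M \<and> f (q M) < 0"
    by (metis choice)
  define s where "s = rec_nat (p 0) (\<lambda>k x. if even k then q x else p x)"
  have s_0: "s 0 = p 0" and s_Suc: "\<And>k. s (Suc k) = (if even k then q (s k) else p (s k))"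
    by (simp_all add: s_def)
  have s_less: "s k < s (Suc k)" for k
    using p[of "s k"] q[of "s k"] by (simp add: s_Suc)
  have s_pos: "s k > 0" for k
  proof (induction k)
    case 0
    then show ?case using p[of 0] by (simp add: s_0)
  next
    case (Suc k)
    then show ?case using s_less[of k] by linarith
  qed
  have s_sign: "if even k then f (s k) > 0 else f (s k) < 0" for k
  proof (induction k)
    case 0
    then show ?case using p[of 0] by (simp add: s_0)
  next
    case (Suc k)
    then show ?case using p[of "s k"] q[of "s k"] by (simp add: s_Suc)
  qed
  have "f (s k) * f (s (Suc k)) < 0" for k
    using s_sign[of k] s_sign[of "Suc k"]
    by (cases "even k") (simp_all add: mult_pos_neg mult_neg_pos)
  moreover have "strict_mono s"
    using s_less by (simp add: strict_mono_Suc_iff)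
  ultimately show ?thesis
    unfolding changes_sign_infinitely_often_def using s_pos by blast
qed

lemma mono_on_if_derivative_nonneg:
  fixes f :: "real \<Rightarrow> real"
  assumes "is_interval S"
    and "\<And>t. t \<in> S \<Longrightarrow> (f has_real_derivative f' t) (at t)"
    and "\<And>t. t \<in> S \<Longrightarrow> f' t \<ge> 0"
  shows "mono_on S f"
proof (rule monotone_onI)
  fix r s assume "r \<in> S" "s \<in> S" "r \<le> s"
  then have "{r..s} \<subseteq> S"
    using \<open>is_interval S\<close> unfolding is_interval_1 by (meson atLeastAtMost_iff subsetI)
  then show "f r \<le> f s"
    using assms(2,3) by (intro deriv_nonneg_imp_mono[of r s f f', OF _ _ \<open>r \<le> s\<close>]) blast+
qed

lemma antimono_on_if_derivative_nonpos:
  fixes f :: "real \<Rightarrow> real"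
  assumes "is_interval S"
    and "\<And>t. t \<in> S \<Longrightarrow> (f has_real_derivative f' t) (at t)"
    and "\<And>t. t \<in> S \<Longrightarrow> f' t \<le> 0"
  shows "antimono_on S f"
proof -
  have "mono_on S (\<lambda>t. - f t)"
    using assms(1,3)
    by (intro mono_on_if_derivative_nonneg[where f' = "\<lambda>t. - f' t"] DERIV_minus assms(2)) auto
  then show ?thesis
    by (auto simp: monotone_on_def)
qed

lemma eventually_nonzero_if_simple_zero:
  fixes f :: "real \<Rightarrow> real"
  assumes f': "(f has_real_derivative f' x) (at x)" and simple: "f x = 0 \<Longrightarrow> f' x \<noteq> 0"
  shows "eventually (\<lambda>y. f y \<noteq> 0) (at x)"
proof (cases "f x = 0")
  case True
  have "((\<lambda>y. (f y - f x) / (y - x)) \<longlongrightarrow> f' x) (at x)"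
    using f' by (simp add: has_field_derivative_iff)
  then have "eventually (\<lambda>y. (f y - f x) / (y - x) \<noteq> 0) (at x)"
    using simple True by (intro tendsto_imp_eventually_ne) auto
  then show ?thesis
    by (rule eventually_mono) (use True in auto)
next
  case False
  have "(f \<longlongrightarrow> f x) (at x)"
    using DERIV_isCont[OF f'] by (simp add: isCont_def)
  then show ?thesis
    using False by (intro tendsto_imp_eventually_ne)
qed

lemma simple_zeros_sparse:
  fixes f :: "real \<Rightarrow> real"
  assumes "open A"
    and "\<And>t. t \<in> A \<Longrightarrow> (f has_real_derivative f' t) (at t)"
    and "\<And>t. t \<in> A \<Longrightarrow> f t = 0 \<Longrightarrow> f' t \<noteq> 0"
  shows "{t. f t = 0} sparse_in A"
  unfolding sparse_in_eventually_iff[OF \<open>open A\<close>]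
proof
  fix y assume "y \<in> A"
  then show "eventually (\<lambda>z. z \<notin> {t. f t = 0}) (at y)"
    using eventually_nonzero_if_simple_zero[of f f' y, OF assms(2)[OF \<open>y \<in> A\<close>] assms(3)[OF \<open>y \<in> A\<close>]]
    by simp
qed

lemma derivative_neg_between_simple_zeros:
  fixes f :: "real \<Rightarrow> real"
  assumes deriv: "\<And>t. t \<in> {a..b} \<Longrightarrow> (f has_real_derivative f' t) (at t)"
    and simple: "\<And>t. t \<in> {a..b} \<Longrightarrow> f t = 0 \<Longrightarrow> f' t \<noteq> 0"
    and "a < b" "f a = 0" "f b = 0"
  shows "\<exists>t\<in>{a<..<b}. f' t < 0"
proof (rule ccontr)
  assume "\<not> ?thesis"
  then have nonneg: "\<And>t. a < t \<Longrightarrow> t < b \<Longrightarrow> f' t \<ge> 0"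
    by (meson greaterThanLessThan_iff not_less)
  have cont: "continuous_on {a..b} f"
    using deriv by (meson DERIV_isCont continuous_at_imp_continuous_on)
  have mono: "f x \<le> f y" if "a \<le> x" "x \<le> y" "y \<le> b" for x y
  proof (rule DERIV_nonneg_imp_increasing_open[OF \<open>x \<le> y\<close>])
    show "continuous_on {x..y} f"
      using that by (intro continuous_on_subset[OF cont]) auto
    fix z assume "x < z" "z < y"
    then show "\<exists>l. DERIV f z :> l \<and> l \<ge> 0"
      using that deriv[of z] nonneg[of z] by auto
  qed
  define m where "m = (a + b) / 2"
  have zero: "f t = 0" if "\<bar>m - t\<bar> < (b - a) / 2" for t
  proof -
    have "a < t" "t < b"
      using that unfolding m_def abs_less_iff by (simp_all add: field_simps)
    then show ?thesis
      using mono[of a t] mono[of t b] \<open>f a = 0\<close> \<open>f b = 0\<close> by linarith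
  qed
  have "f' m = 0"
    using \<open>a < b\<close> zero[of m] zero
    by (intro DERIV_local_const[OF deriv, of m "(b - a) / 2"]) (auto simp: m_def)
  moreover have "f m = 0" "m \<in> {a..b}"
    using zero[of m] \<open>a < b\<close> by (auto simp: m_def)
  ultimately show False
    using simple by blast
qed

lemma derivative_pos_between_simple_zeros:
  fixes f :: "real \<Rightarrow> real"
  assumes "\<And>t. t \<in> {a..b} \<Longrightarrow> (f has_real_derivative f' t) (at t)"
    and "\<And>t. t \<in> {a..b} \<Longrightarrow> f t = 0 \<Longrightarrow> f' t \<noteq> 0"
    and "a < b" "f a = 0" "f b = 0"
  shows "\<exists>t\<in>{a<..<b}. f' t > 0"
proof -
  have "\<exists>t\<in>{a<..<b}. - f' t < 0"
    using assms by (intro derivative_neg_between_simple_zeros[where f = "\<lambda>t. - f t"] DERIV_minus) auto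
  then show ?thesis
    by auto
qed

lemma infinite_simple_zeros_unbounded:
  fixes f :: "real \<Rightarrow> real"
  assumes deriv: "\<And>t. t > 0 \<Longrightarrow> (f has_real_derivative f' t) (at t)"
    and simple: "\<And>t. t > 0 \<Longrightarrow> f t = 0 \<Longrightarrow> f' t \<noteq> 0"
    and nonzero_at_0: "eventually (\<lambda>t. f t \<noteq> 0) (at_right 0)"
    and infinite: "infinite {t. 0 < t \<and> f t = 0}"
  obtains z1 z2 where "M < z1" "z1 < z2" "f z1 = 0" "f z2 = 0"
proof -
  obtain \<delta> where "\<delta> > 0" and \<delta>: "\<And>t. 0 < t \<Longrightarrow> t < \<delta> \<Longrightarrow> f t \<noteq> 0"
    using nonzero_at_0 by (auto simp: eventually_at_right_field)
  have "{t. f t = 0} sparse_in {0<..}"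
    using deriv simple by (intro simple_zeros_sparse) auto
  then have "{t. f t = 0} sparse_in {\<delta>..max M \<delta>}"
    by (rule sparse_in_subset) (use \<open>\<delta> > 0\<close> in auto)
  then have "finite ({\<delta>..max M \<delta>} \<inter> {t. f t = 0})"
    by (rule sparse_in_compact_finite) simp
  moreover have "{t. 0 < t \<and> f t = 0} \<subseteq> ({\<delta>..max M \<delta>} \<inter> {t. f t = 0}) \<union> {t. M < t \<and> f t = 0}"
    using \<delta> by force
  ultimately have "infinite {t. M < t \<and> f t = 0}"
    using infinite by (meson finite_UnI finite_subset)
  then obtain x where x: "M < x" "f x = 0"
    using infinite_imp_nonempty by blast
  moreover have "infinite ({t. M < t \<and> f t = 0} - {x})"
    using \<open>infinite {t. M < t \<and> f t = 0}\<close> by simp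
  then obtain y where y: "M < y" "f y = 0" "y \<noteq> x"
    using infinite_imp_nonempty by blast
  then show ?thesis
    using x that[of x y] that[of y x] by (cases "x < y") auto
qed

definition radial_energy :: "real \<Rightarrow> (real \<Rightarrow> real) \<Rightarrow> (real \<Rightarrow> real) \<Rightarrow> real \<Rightarrow> real" where
  "radial_energy c v v' t = (t * v' t)^2 / 2 + c * (exp (v t) - 1 - v t)"

locale shifted_gelfand_ode =
  fixes k :: nat and c :: real and v v' v'' :: "real \<Rightarrow> real"
  assumes v: "\<And>t. t > 0 \<Longrightarrow> (v has_real_derivative v' t) (at t)"
    and v': "\<And>t. t > 0 \<Longrightarrow> (v' has_real_derivative v'' t) (at t)"
    and ode: "\<And>t. t > 0 \<Longrightarrow> t^2 * v'' t + (real k + 1) * t * v' t + c * (exp (v t) - 1) = 0"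
    and c_nonneg: "c \<ge> 0"
begin

lemma radial_energy_has_derivative:
  assumes "t > 0"
  shows "(radial_energy c v v' has_real_derivative - real k * t * (v' t)^2) (at t)"
proof -
  have "(radial_energy c v v' has_real_derivative
          v' t * (t * v' t + t^2 * v'' t + c * (exp (v t) - 1))) (at t)"
    unfolding radial_energy_def[abs_def] using v[OF assms] v'[OF assms]
    by (auto intro!: derivative_eq_intros simp: algebra_simps power2_eq_square)
  moreover have "t * v' t + t^2 * v'' t + c * (exp (v t) - 1) = - real k * t * v' t"
    using ode[OF assms, unfolded distrib_right] by linarith
  then have "v' t * (t * v' t + t^2 * v'' t + c * (exp (v t) - 1)) = - real k * t * (v' t)^2"
    by (simp add: power2_eq_square)
  ultimately show ?thesis
    by simp
qed

lemma radial_energy_weighted_mono: "mono_on {0<..} (\<lambda>t. t^(2*k) * radial_energy c v v' t)"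
proof (rule mono_on_if_derivative_nonneg)
  show "((\<lambda>t. t^(2*k) * radial_energy c v v' t) has_real_derivative
         real (2*k) * t^(2*k - 1) * radial_energy c v v' t + t^(2*k) * (- real k * t * (v' t)^2)) (at t)"
    if "t \<in> {0<..}" for t
    using that radial_energy_has_derivative[of t] by (auto intro!: derivative_eq_intros)
  fix t :: real assume "t \<in> {0<..}"
  have "real (2*k) * t^(2*k - 1) * radial_energy c v v' t + t^(2*k) * (- real k * t * (v' t)^2)
      = real (2*k) * c * t^(2*k - 1) * (exp (v t) - 1 - v t)"
    by (cases k) (simp_all add: radial_energy_def algebra_simps power2_eq_square)
  moreover have "exp (v t) - 1 - v t \<ge> 0"
    using exp_ge_add_one_self[of "v t"] by linarith
  ultimately show "real (2*k) * t^(2*k - 1) * radial_energy c v v' t + t^(2*k) * (- real k * t * (v' t)^2) \<ge> 0"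
    using \<open>t \<in> {0<..}\<close> c_nonneg by simp
qed (simp add: is_interval_ci)

lemma radial_energy_pos:
  assumes "c > 0" and nonzero_at_0: "eventually (\<lambda>t. v t \<noteq> 0) (at_right 0)" and "t > 0"
  shows "radial_energy c v v' t > 0"
proof -
  obtain \<delta> where "\<delta> > 0" and \<delta>: "\<And>s. 0 < s \<Longrightarrow> s < \<delta> \<Longrightarrow> v s \<noteq> 0"
    using nonzero_at_0 by (auto simp: eventually_at_right_field)
  define s where "s = min t \<delta> / 2"
  have s: "0 < s" "s < \<delta>" "s \<le> t"
    using \<open>t > 0\<close> \<open>\<delta> > 0\<close> by (auto simp: s_def)
  have "1 + v s < exp (v s)"
    using exp_minus_greater[of "- v s"] \<delta>[OF s(1,2)] by simp
  then have "radial_energy c v v' s > 0"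
    unfolding radial_energy_def using \<open>c > 0\<close> by (simp add: add_nonneg_pos)
  then have "0 < s^(2*k) * radial_energy c v v' s"
    using s by simp
  also have "\<dots> \<le> t^(2*k) * radial_energy c v v' t"
    using s \<open>t > 0\<close> by (intro mono_onD[OF radial_energy_weighted_mono]) auto
  finally show ?thesis
    using \<open>t > 0\<close> by (simp add: zero_less_mult_iff)
qed

lemma simple_zeros:
  assumes "c > 0" and "eventually (\<lambda>t. v t \<noteq> 0) (at_right 0)" and "t > 0" "v t = 0"
  shows "v' t \<noteq> 0"
  using radial_energy_pos[OF assms(1-3)] \<open>v t = 0\<close> by (auto simp: radial_energy_def)

end

locale gelfand_radial_solution =
  fixes n :: nat and w w' w'' :: "real \<Rightarrow> real"
  assumes n_ge_3: "n \<ge> 3"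
    and w: "\<And>t. t > 0 \<Longrightarrow> (w has_real_derivative w' t) (at t)"
    and w': "\<And>t. t > 0 \<Longrightarrow> (w' has_real_derivative w'' t) (at t)"
    and ode: "\<And>t. t > 0 \<Longrightarrow> w'' t + (real n - 1) / t * w' t + exp (w t) = 0"
    and w_tendsto_0: "(w \<longlongrightarrow> 0) (at_right 0)"
begin

lemma exp_w0: "t > 0 \<Longrightarrow> exp (w0 n t) = (2 * real n - 4) / t^2"
  using n_ge_3 by (simp add: w0_def exp_diff exp_of_nat_mult[of 2, simplified])

lemma shifted_has_derivative:
  "t > 0 \<Longrightarrow> ((\<lambda>s. w s - w0 n s) has_real_derivative w' t + 2 / t) (at t)"
  unfolding w0_def by (auto intro!: derivative_eq_intros w)

lemma shifted_ode:
  assumes "t > 0"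
  shows "t^2 * (w'' t - 2 / t^2) + (real (n - 2) + 1) * t * (w' t + 2 / t)
           + (2 * real n - 4) * (exp (w t - w0 n t) - 1) = 0"
proof -
  have exp_shift: "exp (w t - w0 n t) = exp (w t) * t^2 / (2 * real n - 4)"
    using assms by (simp add: exp_diff exp_w0)
  have "t^2 * w'' t + (real n - 1) * t * w' t + t^2 * exp (w t)
      = t^2 * (w'' t + (real n - 1) / t * w' t + exp (w t))"
    using assms by (simp add: field_simps power2_eq_square)
  also have "\<dots> = 0"
    using ode[OF assms] by simp
  finally have ode_t: "t^2 * w'' t + (real n - 1) * t * w' t + t^2 * exp (w t) = 0" .
  have "t^2 * (w'' t - 2 / t^2) = t^2 * w'' t - 2"
    using assms by (simp add: field_simps)
  moreover have "(real (n - 2) + 1) * t * (w' t + 2 / t) = (real n - 1) * t * w' t + 2 * (real n - 1)"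
    using assms n_ge_3 by (simp add: of_nat_diff field_simps)
  moreover have "(2 * real n - 4) * (exp (w t - w0 n t) - 1) = t^2 * exp (w t) - (2 * real n - 4)"
    using n_ge_3 unfolding exp_shift by (simp add: field_simps)
  ultimately show ?thesis
    using ode_t by (simp only:) argo
qed

sublocale shifted: shifted_gelfand_ode "n - 2" "2 * real n - 4" "\<lambda>s. w s - w0 n s"
  "\<lambda>t. w' t + 2 / t" "\<lambda>t. w'' t - 2 / t^2"
proof
  show "t > 0 \<Longrightarrow> ((\<lambda>t. w' t + 2 / t) has_real_derivative w'' t - 2 / t^2) (at t)" for t
    by (auto intro!: derivative_eq_intros w' simp: power2_eq_square)
qed (use shifted_has_derivative shifted_ode n_ge_3 in auto)

lemma shifted_eventually_neg: "eventually (\<lambda>t. w t - w0 n t < 0) (at_right 0)"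
proof -
  have "((\<lambda>t. w t - ln (2 * real n - 4)) \<longlongrightarrow> 0 - ln (2 * real n - 4)) (at_right 0)"
    by (intro tendsto_intros w_tendsto_0)
  moreover have "filterlim (\<lambda>t. 2 * ln t) at_bot (at_right (0::real))"
    by (intro filterlim_tendsto_pos_mult_at_bot[OF tendsto_const] ln_at_0) simp
  ultimately have "filterlim (\<lambda>t. (w t - ln (2 * real n - 4)) + 2 * ln t) at_bot (at_right 0)"
    by (simp add: filterlim_tendsto_add_at_bot_iff)
  then have "eventually (\<lambda>t. (w t - ln (2 * real n - 4)) + 2 * ln t < 0) (at_right 0)"
    by (rule filterlim_at_bot_dense[THEN iffD1, rule_format])
  then show ?thesis
    by (rule eventually_mono) (simp add: w0_def)
qed

lemma shifted_simple_zeros: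
  assumes "t > 0" "w t = w0 n t"
  shows "w' t + 2 / t \<noteq> 0"
proof -
  have "eventually (\<lambda>t. w t - w0 n t \<noteq> 0) (at_right 0)"
    using shifted_eventually_neg by (rule eventually_mono) simp
  then show ?thesis
    using shifted.simple_zeros[of t] n_ge_3 assms by simp
qed

lemma gelfand_lambda_has_derivative:
  "t > 0 \<Longrightarrow> (gelfand_lambda w has_real_derivative gelfand_lambda w t * (w' t + 2 / t)) (at t)"
  unfolding gelfand_lambda_def[abs_def]
  by (auto intro!: derivative_eq_intros w simp: field_simps power2_eq_square)

lemma deriv_gelfand_lambda: "t > 0 \<Longrightarrow> deriv (gelfand_lambda w) t = gelfand_lambda w t * (w' t + 2 / t)"
  by (rule DERIV_imp_deriv[OF gelfand_lambda_has_derivative])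

lemma gelfand_lambda_pos: "t > 0 \<Longrightarrow> gelfand_lambda w t > 0"
  by (simp add: gelfand_lambda_def)

lemma gelfand_lambda_turns_infinitely_often:
  assumes "infinite {t. 0 < t \<and> w t = w0 n t}"
  shows "changes_sign_infinitely_often (\<lambda>t. deriv (gelfand_lambda w) t)"
proof -
  let ?v = "\<lambda>s. w s - w0 n s" and ?v' = "\<lambda>t. w' t + 2 / t"
  have crossings: "(\<exists>t>max M 0. ?v' t < 0) \<and> (\<exists>t>max M 0. ?v' t > 0)" for M
  proof -
    have nonzero_at_0: "eventually (\<lambda>t. ?v t \<noteq> 0) (at_right 0)"
      using shifted_eventually_neg by (rule eventually_mono) simp
    obtain z1 z2 where z: "max M 0 < z1" "z1 < z2" "?v z1 = 0" "?v z2 = 0"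
      by (rule infinite_simple_zeros_unbounded[where f = ?v and f' = ?v' and M = "max M 0"])
        (use assms nonzero_at_0 shifted_has_derivative shifted_simple_zeros in auto)
    have "\<exists>t\<in>{z1<..<z2}. ?v' t < 0"
      by (rule derivative_neg_between_simple_zeros[where f = ?v])
        (use z shifted_has_derivative shifted_simple_zeros in auto)
    moreover have "\<exists>t\<in>{z1<..<z2}. ?v' t > 0"
      by (rule derivative_pos_between_simple_zeros[where f = ?v])
        (use z shifted_has_derivative shifted_simple_zeros in auto)
    ultimately show ?thesis
      using z(1) by (meson greaterThanLessThan_iff less_trans)
  qed
  show ?thesis
  proof (rule changes_sign_infinitely_oftenI)
    fix M :: real
    obtain t where "t > max M 0" "?v' t < 0"
      using crossings by blast
    then show "\<exists>t>M. deriv (gelfand_lambda w) t < 0"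
      using gelfand_lambda_pos[of t] by (auto simp: deriv_gelfand_lambda mult_pos_neg)
  next
    fix M :: real
    obtain t where "t > max M 0" "?v' t > 0"
      using crossings by blast
    then show "\<exists>t>M. deriv (gelfand_lambda w) t > 0"
      using gelfand_lambda_pos[of t] by (auto simp: deriv_gelfand_lambda)
  qed
qed

lemma gelfand_lambda_mono_on:
  assumes "T \<ge> 0" and "\<And>t. t > T \<Longrightarrow> deriv (\<lambda>s. w s - w0 n s) t \<ge> 0"
  shows "mono_on {T<..} (gelfand_lambda w)"
proof (rule mono_on_if_derivative_nonneg)
  fix t assume "t \<in> {T<..}"
  then have "t > 0"
    using assms(1) by simp
  then have "w' t + 2 / t \<ge> 0"
    using assms(2)[of t] DERIV_imp_deriv[OF shifted_has_derivative] \<open>t \<in> {T<..}\<close> by simp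
  then show "gelfand_lambda w t * (w' t + 2 / t) \<ge> 0"
    using gelfand_lambda_pos[OF \<open>t > 0\<close>] by (simp add: zero_le_mult_iff)
qed (use assms gelfand_lambda_has_derivative in auto)

lemma gelfand_lambda_antimono_on:
  assumes "T \<ge> 0" and "\<And>t. t > T \<Longrightarrow> deriv (\<lambda>s. w s - w0 n s) t \<le> 0"
  shows "antimono_on {T<..} (gelfand_lambda w)"
proof (rule antimono_on_if_derivative_nonpos)
  fix t assume "t \<in> {T<..}"
  then have "t > 0"
    using assms(1) by simp
  then have "w' t + 2 / t \<le> 0"
    using assms(2)[of t] DERIV_imp_deriv[OF shifted_has_derivative] \<open>t \<in> {T<..}\<close> by simp
  then show "gelfand_lambda w t * (w' t + 2 / t) \<le> 0"
    using gelfand_lambda_pos[OF \<open>t > 0\<close>] by (simp add: mult_le_0_iff)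
qed (use assms gelfand_lambda_has_derivative in auto)

end

lemma gelfand_radial_solutionI:
  assumes "n \<ge> 3"
    and w_deriv: "\<And>t. t \<ge> 0 \<Longrightarrow> (w has_real_derivative w' t) (at t within {0..})"
    and "\<And>t. t > 0 \<Longrightarrow> (w' has_real_derivative w'' t) (at t)"
    and "\<And>t. t > 0 \<Longrightarrow> w'' t + (real n - 1) / t * w' t + exp (w t) = 0"
    and "w 0 = 0"
  shows "gelfand_radial_solution n w w' w''"
proof -
  have w_at: "(w has_real_derivative w' t) (at t)" if "t > 0" for t
  proof -
    have "(w has_real_derivative w' t) (at t within {0<..})"
      using that by (intro has_field_derivative_subset[OF w_deriv]) auto
    then show ?thesis
      using that by (simp add: at_within_open[of t "{0<..}"])
  qed
  have "(w \<longlongrightarrow> 0) (at 0 within {0..})"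
    using DERIV_continuous[OF w_deriv[of 0]] \<open>w 0 = 0\<close> by (simp add: continuous_within)
  then have "(w \<longlongrightarrow> 0) (at_right 0)"
    by (rule tendsto_within_subset) auto
  with w_at assms(1,3,4) show ?thesis
    by unfold_locales
qed

theorem lemma3p1:
  fixes n :: nat and w w' w'' :: "real \<Rightarrow> real"
  assumes n3: "n \<ge> 3"
    and w_deriv: "\<And>t. t \<ge> 0 \<Longrightarrow> (w has_real_derivative w' t) (at t within {0..})"
    and w'_deriv: "\<And>t. t > 0 \<Longrightarrow> (w' has_real_derivative w'' t) (at t)"
    and ode: "\<And>t. t > 0 \<Longrightarrow> w'' t + (real n - 1) / t * w' t + exp (w t) = 0"
    and init0: "w 0 = 0"
    and init1: "w' 0 = 0"
  shows
    "(infinite {t. 0 < t \<and> w t = w0 n t} \<longrightarrow>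
        changes_sign_infinitely_often (\<lambda>t. deriv (gelfand_lambda w) t))
     \<and>
     (\<forall>T. finite {t. 0 < t \<and> w t = w0 n t}
          \<and> 0 < T \<and> (\<forall>t. 0 < t \<and> w t = w0 n t \<longrightarrow> t \<le> T)
          \<and> ((\<forall>t>T. deriv (\<lambda>s. w s - w0 n s) t \<ge> 0) \<or> (\<forall>t>T. deriv (\<lambda>s. w s - w0 n s) t \<le> 0))
        \<longrightarrow> mono_on {T<..} (gelfand_lambda w) \<or> antimono_on {T<..} (gelfand_lambda w))"
proof -
  interpret gelfand_radial_solution n w w' w''
    using n3 w_deriv w'_deriv ode init0 by (rule gelfand_radial_solutionI)
  show ?thesis
  proof (intro conjI allI impI)
    show "changes_sign_infinitely_often (\<lambda>t. deriv (gelfand_lambda w) t)"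
      if "infinite {t. 0 < t \<and> w t = w0 n t}"
      using that by (rule gelfand_lambda_turns_infinitely_often)
    fix T
    assume "finite {t. 0 < t \<and> w t = w0 n t}
          \<and> 0 < T \<and> (\<forall>t. 0 < t \<and> w t = w0 n t \<longrightarrow> t \<le> T)
          \<and> ((\<forall>t>T. deriv (\<lambda>s. w s - w0 n s) t \<ge> 0) \<or> (\<forall>t>T. deriv (\<lambda>s. w s - w0 n s) t \<le> 0))"
    then have "T \<ge> 0"
      and "(\<forall>t>T. deriv (\<lambda>s. w s - w0 n s) t \<ge> 0) \<or> (\<forall>t>T. deriv (\<lambda>s. w s - w0 n s) t \<le> 0)"
      by auto
    then show "mono_on {T<..} (gelfand_lambda w) \<or> antimono_on {T<..} (gelfand_lambda w)"
      using gelfand_lambda_mono_on gelfand_lambda_antimono_on by blast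
  qed
qed

end
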